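(* Let $n\ge 1$, let $b\in B_n\cong\mathrm{MCG}(D^2\setminus\{p_1,\dots,p_n\},\partial D^2)$, and let $\tau\in\mathrm{MCG}(D^2\setminus\{p_1,\dots,p_n\})$ be an orientation-reversing involution (i.e. $\tau$ reverses orientation and $\tau^2=\mathrm{Id}$). Set $b^*=\tau b\tau$. Then the closure of the braid $bb^*$ is a knot (i.e. has exactly one component) if and only if $n$ is odd and $\pi(b\tau)$ is an $n$-cycle, where $\pi$ denotes the canonical map to the symmetric group $S_n$ recording the induced permutation of the punctures $p_1,\dots,p_n$.
   Context: Braids are viewed as mapping classes of the $n$-punctured disc relative to the boundary; the mapping class group $\mathrm{MCG}(D^2\setminus\{p_1,\dots,p_n\})$ (not relative to the boundary) acts on $B_n$ by conjugation, which is how $b^*=\tau b\tau$ is regarded as a braid. *)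

theory Defs
  imports "HOL-Complex_Analysis.Complex_Analysis"
begin

text \<open>Model: the disc D^2 is the closed unit disc in the complex plane, the punctures
form a finite set P of interior points. Mapping classes are represented by homeomorphisms
of the closed disc preserving P setwise (these are exactly the homeomorphisms of the
punctured disc); braids are those fixing the boundary circle pointwise.\<close>

abbreviation disc :: "complex set" where "disc \<equiv> cball 0 1"

definition is_homeo :: "(complex \<Rightarrow> complex) \<Rightarrow> bool" where
  "is_homeo f \<longleftrightarrow> (\<exists>g. homeomorphism disc disc f g)"

definition mcg_rep :: "complex set \<Rightarrow> (complex \<Rightarrow> complex) \<Rightarrow> bool" where
  "mcg_rep P f \<longleftrightarrow> is_homeo f \<and> f ` P = P"

definition braid_rep :: "complex set \<Rightarrow> (complex \<Rightarrow> complex) \<Rightarrow> bool" where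
  "braid_rep P f \<longleftrightarrow> mcg_rep P f \<and> (\<forall>z\<in>sphere 0 1. f z = z)"

definition mcg_isotopic :: "complex set \<Rightarrow> (complex \<Rightarrow> complex) \<Rightarrow> (complex \<Rightarrow> complex) \<Rightarrow> bool" where
  "mcg_isotopic P f g \<longleftrightarrow>
     (\<exists>H :: real \<times> complex \<Rightarrow> complex.
        continuous_on ({0..1} \<times> disc) H \<and>
        (\<forall>t\<in>{0..1}. mcg_rep P (\<lambda>z. H (t, z))) \<and>
        (\<forall>z\<in>disc. H (0, z) = f z \<and> H (1, z) = g z))"

text \<open>Orientation reversing: the induced map on the boundary circle has degree -1.\<close>
definition orientation_reversing :: "(complex \<Rightarrow> complex) \<Rightarrow> bool" where
  "orientation_reversing h \<longleftrightarrow> winding_number (h \<circ> circlepath 0 1) 0 = -1"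

text \<open>Standard embedding of disc x [0,1] (with ends glued) as a solid torus in R^3.\<close>
definition solid_torus_emb :: "complex \<Rightarrow> real \<Rightarrow> real \<times> real \<times> real" where
  "solid_torus_emb z t =
     ((2 + Re z) * cos (2 * pi * t), (2 + Re z) * sin (2 * pi * t), Im z)"

text \<open>An isotopy of the disc (ignoring punctures) from the identity to g; its traces
of the punctures form a geometric braid representing g.\<close>
definition disc_isotopy_from_id :: "(complex \<Rightarrow> complex) \<Rightarrow> (real \<times> complex \<Rightarrow> complex) \<Rightarrow> bool" where
  "disc_isotopy_from_id g H \<longleftrightarrow>
     continuous_on ({0..1} \<times> disc) H \<and>
     (\<forall>t\<in>{0..1}. is_homeo (\<lambda>z. H (t, z))) \<and>
     (\<forall>z\<in>disc. H (0, z) = z \<and> H (1, z) = g z)"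

definition closed_braid :: "complex set \<Rightarrow> (real \<times> complex \<Rightarrow> complex) \<Rightarrow> (real \<times> real \<times> real) set" where
  "closed_braid P H = (\<lambda>(t, p). solid_torus_emb (H (t, p)) t) ` ({0..1} \<times> P)"

definition closure_is_knot :: "complex set \<Rightarrow> (complex \<Rightarrow> complex) \<Rightarrow> bool" where
  "closure_is_knot P g \<longleftrightarrow>
     (\<forall>H. disc_isotopy_from_id g H \<longrightarrow>
        closed_braid P H \<noteq> {} \<and> connected (closed_braid P H))"

definition is_full_cycle_on :: "complex set \<Rightarrow> (complex \<Rightarrow> complex) \<Rightarrow> bool" where
  "is_full_cycle_on P \<sigma> \<longleftrightarrow>
     (\<exists>cs. distinct cs \<and> set cs = P \<and>
        (\<forall>i<length cs. \<sigma> (cs ! i) = cs ! (Suc i mod length cs)))"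

end

theory Submission
  imports Defs
begin

(* The closure of a braid is connected exactly when the permutation it induces on the punctures
   is transitive: the end of the strand of a puncture p is glued to the start of the strand of its
   image, while the strands over two complementary invariant sets of punctures form disjoint
   compact pieces of the closure. The Alexander trick provides an isotopy from the identity to any
   boundary-fixing homeomorphism of the disc, so the quantification over isotopies in
   closure_is_knot is not vacuous.

   Since h o h is isotopic to the identity through maps permuting the finitely many punctures, h is
   an involution on them, so k = h^-1 agrees with h there and b b* = f h f k induces the square of
   sigma = f h. Finally, the square of a permutation sigma of n points is transitive iff sigma is an
   n-cycle and n is odd, because 2 is invertible modulo n exactly when n is odd. *)

section \<open>Permutations with a single orbit\<close>

definition transitive_on :: "'a set \<Rightarrow> ('a \<Rightarrow> 'a) \<Rightarrow> bool" where
  "transitive_on P \<sigma> \<longleftrightarrow> (\<forall>p\<in>P. \<forall>q\<in>P. \<exists>m. (\<sigma> ^^ m) p = q)"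

lemma funpow_mem: "\<sigma> ` P \<subseteq> P \<Longrightarrow> p \<in> P \<Longrightarrow> (\<sigma> ^^ m) p \<in> P"
  by (induction m) auto

lemma funpow_cong_on:
  assumes "\<sigma> ` P \<subseteq> P" and "\<And>p. p \<in> P \<Longrightarrow> \<tau> p = \<sigma> p" and "p \<in> P"
  shows "(\<tau> ^^ m) p = (\<sigma> ^^ m) p"
  by (induction m) (simp_all add: assms funpow_mem)

lemma transitive_on_cong:
  assumes "\<sigma> ` P \<subseteq> P" and "\<And>p. p \<in> P \<Longrightarrow> \<tau> p = \<sigma> p"
  shows "transitive_on P \<tau> \<longleftrightarrow> transitive_on P \<sigma>"
  unfolding transitive_on_def using funpow_cong_on[OF assms] by metis

lemma funpow_diff_fixed:
  assumes \<sigma>: "bij_betw \<sigma> P P" and p: "p \<in> P" and "i \<le> j"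
    and eq: "(\<sigma> ^^ i) p = (\<sigma> ^^ j) p"
  shows "(\<sigma> ^^ (j - i)) p = p"
proof -
  have "(\<sigma> ^^ i) ((\<sigma> ^^ (j - i)) p) = (\<sigma> ^^ i) p"
    using eq \<open>i \<le> j\<close> by (metis funpow_add le_add_diff_inverse o_apply)
  moreover have "inj_on (\<sigma> ^^ i) P"
    using bij_betw_funpow[OF \<sigma>] by (rule bij_betw_imp_inj_on)
  moreover have "(\<sigma> ^^ (j - i)) p \<in> P"
    using bij_betw_funpow[OF \<sigma>] p by (rule bij_betw_apply)
  ultimately show ?thesis
    using p by (auto dest: inj_onD)
qed

lemma transitive_on_card_le_period:
  assumes "transitive_on P \<sigma>" and "p \<in> P" and "0 < d" and "(\<sigma> ^^ d) p = p"
  shows "card P \<le> d"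
proof -
  have "P \<subseteq> (\<lambda>m. (\<sigma> ^^ m) p) ` {..<d}"
  proof
    fix q assume "q \<in> P"
    then obtain m where "(\<sigma> ^^ m) p = q"
      using assms(1,2) unfolding transitive_on_def by blast
    then have "q = (\<sigma> ^^ (m mod d)) p"
      using funpow_mod_eq[OF assms(4)] by simp
    then show "q \<in> (\<lambda>m. (\<sigma> ^^ m) p) ` {..<d}"
      using \<open>0 < d\<close> by simp
  qed
  then have "card P \<le> card ((\<lambda>m. (\<sigma> ^^ m) p) ` {..<d})"
    by (simp add: card_mono)
  also have "\<dots> \<le> d"
    using card_image_le[of "{..<d}"] by simp
  finally show ?thesis .
qed

lemma inj_on_funpow_transitive_on:
  assumes \<sigma>: "bij_betw \<sigma> P P" and "transitive_on P \<sigma>" and p: "p \<in> P"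
  shows "inj_on (\<lambda>i. (\<sigma> ^^ i) p) {..<card P}"
proof (rule linorder_inj_onI')
  fix i j assume "i \<in> {..<card P}" "j \<in> {..<card P}" "i < j"
  show "(\<sigma> ^^ i) p \<noteq> (\<sigma> ^^ j) p"
  proof
    assume "(\<sigma> ^^ i) p = (\<sigma> ^^ j) p"
    then have "(\<sigma> ^^ (j - i)) p = p"
      using funpow_diff_fixed[OF \<sigma> p] \<open>i < j\<close> by simp
    then have "card P \<le> j - i"
      using transitive_on_card_le_period[OF assms(2) p] \<open>i < j\<close> by simp
    then show False
      using \<open>j \<in> {..<card P}\<close> by simp
  qed
qed

lemma funpow_image_transitive_on:
  assumes "finite P" and \<sigma>: "bij_betw \<sigma> P P" and "transitive_on P \<sigma>" and p: "p \<in> P"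
  shows "(\<lambda>i. (\<sigma> ^^ i) p) ` {..<card P} = P"
proof (rule card_subset_eq[OF \<open>finite P\<close>])
  show "(\<lambda>i. (\<sigma> ^^ i) p) ` {..<card P} \<subseteq> P"
    using funpow_mem[OF bij_betw_imp_surj_on[OF \<sigma>, THEN equalityD1] p] by blast
  show "card ((\<lambda>i. (\<sigma> ^^ i) p) ` {..<card P}) = card P"
    using card_image[OF inj_on_funpow_transitive_on[OF \<sigma> assms(3) p]] by simp
qed

lemma funpow_card_transitive_on:
  assumes "finite P" and \<sigma>: "bij_betw \<sigma> P P" and "transitive_on P \<sigma>" and p: "p \<in> P"
  shows "(\<sigma> ^^ card P) p = p"
proof -
  have "(\<sigma> ^^ card P) p \<in> (\<lambda>i. (\<sigma> ^^ i) p) ` {..<card P}"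
    unfolding funpow_image_transitive_on[OF assms]
    using bij_betw_funpow[OF \<sigma>] p by (rule bij_betw_apply)
  then obtain i where i: "i < card P" "(\<sigma> ^^ card P) p = (\<sigma> ^^ i) p"
    by blast
  then have "(\<sigma> ^^ (card P - i)) p = p"
    using funpow_diff_fixed[OF \<sigma> p, of i "card P"] by simp
  then have "i = 0"
    using transitive_on_card_le_period[OF assms(3) p, of "card P - i"] i(1) by linarith
  then show ?thesis
    using i by simp
qed

lemma is_full_cycle_on_imp_transitive_on:
  assumes "is_full_cycle_on P \<sigma>"
  shows "transitive_on P \<sigma>"
proof -
  obtain cs where cs: "set cs = P" "\<And>i. i < length cs \<Longrightarrow> \<sigma> (cs ! i) = cs ! (Suc i mod length cs)"
    using assms unfolding is_full_cycle_on_def by blast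
  let ?n = "length cs"
  have iter: "(\<sigma> ^^ m) (cs ! i) = cs ! ((i + m) mod ?n)" if "i < ?n" for i m
  proof (induction m)
    case (Suc m)
    have "0 < ?n"
      using that by linarith
    then have "(i + m) mod ?n < ?n"
      by simp
    then have "\<sigma> (cs ! ((i + m) mod ?n)) = cs ! (Suc ((i + m) mod ?n) mod ?n)"
      by (rule cs(2))
    then show ?case
      using Suc by (simp add: mod_Suc_eq)
  qed (use that in simp)
  show ?thesis
    unfolding transitive_on_def
  proof (intro ballI)
    fix p q assume "p \<in> P" "q \<in> P"
    then obtain i j where "i < ?n" "j < ?n" "p = cs ! i" "q = cs ! j"
      using cs(1) by (metis in_set_conv_nth)
    moreover have "(i + (j + ?n - i)) mod ?n = j"
      using \<open>i < ?n\<close> \<open>j < ?n\<close> by simp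
    ultimately show "\<exists>m. (\<sigma> ^^ m) p = q"
      using iter by metis
  qed
qed

lemma transitive_on_imp_is_full_cycle_on:
  assumes "finite P" and "P \<noteq> {}" and \<sigma>: "bij_betw \<sigma> P P" and "transitive_on P \<sigma>"
  shows "is_full_cycle_on P \<sigma>"
proof -
  obtain p where p: "p \<in> P"
    using \<open>P \<noteq> {}\<close> by blast
  define cs where "cs = map (\<lambda>i. (\<sigma> ^^ i) p) [0..<card P]"
  have "distinct cs"
    unfolding cs_def distinct_map
    using inj_on_funpow_transitive_on[OF \<sigma> assms(4) p] by (simp add: lessThan_atLeast0)
  moreover have "set cs = P"
    unfolding cs_def using funpow_image_transitive_on[OF assms(1,3,4) p]
    by (simp add: lessThan_atLeast0)
  moreover have "\<sigma> (cs ! i) = cs ! (Suc i mod length cs)" if "i < length cs" for i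
  proof (cases "Suc i < card P")
    case False
    then have n: "card P = Suc i"
      using that unfolding cs_def by simp
    have "\<sigma> (cs ! i) = (\<sigma> ^^ Suc i) p"
      using that unfolding cs_def by simp
    also have "\<dots> = p"
      using funpow_card_transitive_on[OF assms(1,3,4) p] n by simp
    also have "\<dots> = cs ! (Suc i mod length cs)"
      using n unfolding cs_def by (simp del: upt_Suc)
    finally show ?thesis .
  qed (use that in \<open>simp add: cs_def\<close>)
  ultimately show ?thesis
    unfolding is_full_cycle_on_def by blast
qed

lemma is_full_cycle_on_iff_transitive_on:
  assumes "finite P" and "P \<noteq> {}" and "bij_betw \<sigma> P P"
  shows "is_full_cycle_on P \<sigma> \<longleftrightarrow> transitive_on P \<sigma>"
  using assms is_full_cycle_on_imp_transitive_on transitive_on_imp_is_full_cycle_on by blast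

lemma funpow_comp_self: "(\<sigma> \<circ> \<sigma>) ^^ m = \<sigma> ^^ (2 * m)"
proof -
  have "\<sigma> \<circ> \<sigma> = \<sigma> ^^ 2"
    by (simp add: numeral_2_eq_2)
  then show ?thesis
    by (simp add: funpow_mult)
qed

lemma odd_card_if_transitive_on_square:
  assumes "finite P" and "P \<noteq> {}" and \<sigma>: "bij_betw \<sigma> P P" and sq: "transitive_on P (\<sigma> \<circ> \<sigma>)"
  shows "odd (card P)"
proof
  let ?n = "card P"
  assume "even ?n"
  have "0 < ?n"
    using assms(1,2) by (simp add: card_gt_0_iff)
  with \<open>even ?n\<close> have "1 < ?n"
    by presburger
  have trans: "transitive_on P \<sigma>"
    using sq unfolding transitive_on_def funpow_comp_self by blast
  obtain p where p: "p \<in> P"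
    using assms(2) by blast
  then obtain m where "(\<sigma> ^^ (2 * m)) p = (\<sigma> ^^ 1) p"
    using sq bij_betw_apply[OF \<sigma> p] unfolding transitive_on_def funpow_comp_self by auto
  then have "(\<sigma> ^^ (2 * m mod ?n)) p = (\<sigma> ^^ 1) p"
    using funpow_mod_eq[OF funpow_card_transitive_on[OF assms(1) \<sigma> trans p]] by simp
  moreover have "2 * m mod ?n \<in> {..<?n}" and "1 \<in> {..<?n}"
    using \<open>0 < ?n\<close> \<open>1 < ?n\<close> by simp_all
  ultimately have "2 * m mod ?n = 1"
    by (rule inj_onD[OF inj_on_funpow_transitive_on[OF \<sigma> trans p]])
  moreover have "even (2 * m mod ?n)"
    using \<open>even ?n\<close> by (metis dvd_mod dvd_triv_left)
  ultimately show False
    by simp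
qed

lemma transitive_on_square_if_odd_card:
  assumes "finite P" and \<sigma>: "bij_betw \<sigma> P P" and "odd (card P)" and trans: "transitive_on P \<sigma>"
  shows "transitive_on P (\<sigma> \<circ> \<sigma>)"
  unfolding transitive_on_def funpow_comp_self
proof (intro ballI)
  let ?n = "card P"
  fix p q assume p: "p \<in> P" and "q \<in> P"
  then obtain j where j: "(\<sigma> ^^ j) p = q"
    using trans unfolding transitive_on_def by blast
  have period: "(\<sigma> ^^ ?n) p = p"
    using funpow_card_transitive_on[OF assms(1) \<sigma> trans p] .
  \<comment> \<open>(n + 1) div 2 is the inverse of 2 modulo the odd number n\<close>
  define m where "m = j * ((?n + 1) div 2)"
  have "2 * m = j * (2 * ((?n + 1) div 2))"
    unfolding m_def by (simp add: ac_simps)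
  also have "\<dots> = j * ?n + j"
    using \<open>odd ?n\<close> by simp
  finally have "2 * m mod ?n = j mod ?n"
    by simp
  then have "(\<sigma> ^^ (2 * m)) p = q"
    using funpow_mod_eq[OF period] j by metis
  then show "\<exists>m. (\<sigma> ^^ (2 * m)) p = q" ..
qed

lemma transitive_on_square_iff:
  assumes "finite P" and "P \<noteq> {}" and "bij_betw \<sigma> P P"
  shows "transitive_on P (\<sigma> \<circ> \<sigma>) \<longleftrightarrow> odd (card P) \<and> transitive_on P \<sigma>"
proof -
  have "transitive_on P (\<sigma> \<circ> \<sigma>) \<Longrightarrow> transitive_on P \<sigma>"
    unfolding transitive_on_def funpow_comp_self by blast
  then show ?thesis
    using assms odd_card_if_transitive_on_square transitive_on_square_if_odd_card by blast
qed

lemma bij_betw_complement_invariant: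
  assumes "finite P" and \<sigma>: "bij_betw \<sigma> P P" and "A \<subseteq> P" and "\<sigma> ` A \<subseteq> A"
  shows "\<sigma> ` (P - A) \<subseteq> P - A"
proof
  have inj: "inj_on \<sigma> P"
    using \<sigma> by (rule bij_betw_imp_inj_on)
  have "\<sigma> ` A = A"
    using endo_inj_surj[OF finite_subset[OF \<open>A \<subseteq> P\<close> \<open>finite P\<close>] \<open>\<sigma> ` A \<subseteq> A\<close>]
      inj_on_subset[OF inj \<open>A \<subseteq> P\<close>] .
  fix y assume "y \<in> \<sigma> ` (P - A)"
  then obtain x where x: "x \<in> P" "x \<notin> A" "y = \<sigma> x"
    by blast
  have "y \<notin> A"
  proof
    assume "y \<in> A"
    then obtain a where "a \<in> A" "\<sigma> a = \<sigma> x"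
      using \<open>\<sigma> ` A = A\<close> x(3) by (metis imageE)
    then have "a = x"
      using inj_onD[OF inj] \<open>A \<subseteq> P\<close> x(1) by blast
    then show False
      using \<open>a \<in> A\<close> x(2) by simp
  qed
  then show "y \<in> P - A"
    using bij_betw_apply[OF \<sigma> x(1)] x(3) by simp
qed

lemma transitive_onI_invariant:
  assumes "finite P" and \<sigma>: "bij_betw \<sigma> P P"
    and invariant: "\<And>A. A \<subseteq> P \<Longrightarrow> \<sigma> ` A \<subseteq> A \<Longrightarrow> \<sigma> ` (P - A) \<subseteq> P - A \<Longrightarrow> A = {} \<or> A = P"
  shows "transitive_on P \<sigma>"
  unfolding transitive_on_def
proof (intro ballI)
  fix p q assume "p \<in> P" "q \<in> P"
  define A where "A = range (\<lambda>m. (\<sigma> ^^ m) p)"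
  have "A \<subseteq> P"
    unfolding A_def using funpow_mem[OF bij_betw_imp_surj_on[OF \<sigma>, THEN equalityD1] \<open>p \<in> P\<close>]
    by blast
  moreover have "\<sigma> ` A \<subseteq> A"
  proof
    fix y assume "y \<in> \<sigma> ` A"
    then obtain m where "y = (\<sigma> ^^ Suc m) p"
      unfolding A_def by auto
    then show "y \<in> A"
      unfolding A_def by blast
  qed
  moreover have "p \<in> A"
    unfolding A_def using funpow_0 by (metis rangeI)
  ultimately have "A = P"
    using invariant bij_betw_complement_invariant[OF assms(1,2)] by blast
  then show "\<exists>m. (\<sigma> ^^ m) p = q"
    using \<open>q \<in> P\<close> unfolding A_def by auto
qed

section \<open>Closed braids\<close>

lemma solid_torus_emb_periodic: "solid_torus_emb z 1 = solid_torus_emb z 0"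
  by (simp add: solid_torus_emb_def)

lemma solid_torus_emb_eqD:
  assumes "-2 < Re z" and "-2 < Re w" and t: "t \<in> {0..1}" and s: "s \<in> {0..1}"
    and eq: "solid_torus_emb z t = solid_torus_emb w s"
  shows "z = w \<and> (t = s \<or> t = 0 \<and> s = 1 \<or> t = 1 \<and> s = 0)"
proof -
  define r where "r = 2 + Re z"
  define r' where "r' = 2 + Re w"
  have cos: "r * cos (2 * pi * t) = r' * cos (2 * pi * s)"
    and sin: "r * sin (2 * pi * t) = r' * sin (2 * pi * s)" and "Im z = Im w"
    using eq by (simp_all add: solid_torus_emb_def r_def r'_def)
  have "r\<^sup>2 = (r * cos (2 * pi * t))\<^sup>2 + (r * sin (2 * pi * t))\<^sup>2"
    by (simp add: power_mult_distrib flip: distrib_left)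
  also have "\<dots> = r'\<^sup>2"
    unfolding cos sin by (simp add: power_mult_distrib flip: distrib_left)
  finally have "r = r'"
    using assms(1,2) unfolding r_def r'_def by (simp add: power2_eq_iff)
  then have "z = w"
    using \<open>Im z = Im w\<close> unfolding r_def r'_def by (simp add: complex_eqI)
  have "r \<noteq> 0"
    using assms(1) unfolding r_def by simp
  then have "sin (2 * pi * t) = sin (2 * pi * s) \<and> cos (2 * pi * t) = cos (2 * pi * s)"
    using cos sin \<open>r = r'\<close> by simp
  then obtain k :: int where "2 * pi * t = 2 * pi * s + 2 * pi * k"
    unfolding sin_cos_eq_iff by blast
  then have "2 * pi * t = 2 * pi * (s + k)"
    by (simp add: algebra_simps)
  then have "t = s + k"
    by simp
  then have "k = -1 \<or> k = 0 \<or> k = 1"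
    using t s by auto
  then show ?thesis
    using \<open>z = w\<close> \<open>t = s + k\<close> t s by auto
qed

lemma disc_isotopy_from_id_slice:
  assumes "disc_isotopy_from_id g H" and "t \<in> {0..1}"
  shows "(\<lambda>z. H (t, z)) ` disc \<subseteq> disc" and "inj_on (\<lambda>z. H (t, z)) disc"
proof -
  obtain g' where "homeomorphism disc disc (\<lambda>z. H (t, z)) g'"
    using assms unfolding disc_isotopy_from_id_def is_homeo_def by blast
  then show "(\<lambda>z. H (t, z)) ` disc \<subseteq> disc" and "inj_on (\<lambda>z. H (t, z)) disc"
    by (auto simp: homeomorphism_image1 intro: inj_on_inverseI homeomorphism_apply1)
qed

lemma continuous_on_closed_braid_param:
  assumes "continuous_on ({0..1} \<times> disc) H" and "A \<subseteq> disc"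
  shows "continuous_on ({0..1} \<times> A) (\<lambda>(t, p). solid_torus_emb (H (t, p)) t)"
proof -
  have "continuous_on ({0..1} \<times> A) H"
    using assms(1) by (rule continuous_on_subset) (use assms(2) in auto)
  then show ?thesis
    unfolding solid_torus_emb_def case_prod_beta prod.collapse by (intro continuous_intros)
qed

lemma closed_braid_Un: "closed_braid (A \<union> B) H = closed_braid A H \<union> closed_braid B H"
  unfolding closed_braid_def by blast

lemma closed_braid_eq_empty_iff: "closed_braid A H = {} \<longleftrightarrow> A = {}"
  unfolding closed_braid_def by auto

lemma compact_closed_braid:
  assumes "continuous_on ({0..1} \<times> disc) H" and "finite A" and "A \<subseteq> disc"
  shows "compact (closed_braid A H)"
  unfolding closed_braid_def
  using continuous_on_closed_braid_param[OF assms(1,3)]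
  by (rule compact_continuous_image) (simp add: compact_Times finite_imp_compact \<open>finite A\<close>)

lemma connected_closed_braid_singleton:
  assumes "continuous_on ({0..1} \<times> disc) H" and "p \<in> disc"
  shows "connected (closed_braid {p} H)"
  unfolding closed_braid_def
  using continuous_on_closed_braid_param[OF assms(1)] assms(2)
  by (intro connected_continuous_image) (auto intro: connected_Times)

lemma closed_braid_disjoint:
  assumes H: "disc_isotopy_from_id g H" and "A \<subseteq> disc" and "B \<subseteq> disc" and "A \<inter> B = {}"
    and "g ` A \<subseteq> A" and "g ` B \<subseteq> B"
  shows "closed_braid A H \<inter> closed_braid B H = {}"
proof (rule ccontr)
  assume "closed_braid A H \<inter> closed_braid B H \<noteq> {}"
  then obtain x where "x \<in> closed_braid A H" and "x \<in> closed_braid B H"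
    by blast
  then obtain a b t s where ab: "a \<in> A" "b \<in> B" and ts: "t \<in> {0..1}" "s \<in> {0..1}"
    and "x = solid_torus_emb (H (t, a)) t" and "x = solid_torus_emb (H (s, b)) s"
    unfolding closed_braid_def by auto
  then have eq: "solid_torus_emb (H (t, a)) t = solid_torus_emb (H (s, b)) s"
    by simp
  have "a \<in> disc" "b \<in> disc"
    using ab assms(2,3) by auto
  then have "H (t, a) \<in> disc" and "H (s, b) \<in> disc"
    using disc_isotopy_from_id_slice(1)[OF H ts(1)] disc_isotopy_from_id_slice(1)[OF H ts(2)]
    by blast+
  then have "-2 < Re (H (t, a))" "-2 < Re (H (s, b))"
    using abs_Re_le_cmod[of "H (t, a)"] abs_Re_le_cmod[of "H (s, b)"] by auto
  from solid_torus_emb_eqD[OF this ts eq]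
  have same: "H (t, a) = H (s, b)" and "t = s \<or> t = 0 \<and> s = 1 \<or> t = 1 \<and> s = 0"
    by auto
  then consider "t = s" | "t = 0" "s = 1" | "t = 1" "s = 0"
    by blast
  then show False
  proof cases
    case 1
    then have "a = b"
      using inj_onD[OF disc_isotopy_from_id_slice(2)[OF H ts(1)]] same \<open>a \<in> disc\<close> \<open>b \<in> disc\<close>
      by simp
    then show False
      using ab \<open>A \<inter> B = {}\<close> by blast
  next
    case 2
    then have "a = g b"
      using same H \<open>a \<in> disc\<close> \<open>b \<in> disc\<close> unfolding disc_isotopy_from_id_def by simp
    then show False
      using ab \<open>g ` B \<subseteq> B\<close> \<open>A \<inter> B = {}\<close> by blast
  next
    case 3
    then have "g a = b"
      using same H \<open>a \<in> disc\<close> \<open>b \<in> disc\<close> unfolding disc_isotopy_from_id_def by simp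
    then show False
      using ab \<open>g ` A \<subseteq> A\<close> \<open>A \<inter> B = {}\<close> by blast
  qed
qed

lemma connected_closed_braid_imp_transitive_on:
  assumes "finite P" and "P \<subseteq> disc" and g: "bij_betw g P P" and H: "disc_isotopy_from_id g H"
    and connected: "connected (closed_braid P H)"
  shows "transitive_on P g"
proof (rule transitive_onI_invariant[OF \<open>finite P\<close> g])
  fix A assume A: "A \<subseteq> P" "g ` A \<subseteq> A" "g ` (P - A) \<subseteq> P - A"
  let ?C = "closed_braid A H" and ?D = "closed_braid (P - A) H"
  have cont: "continuous_on ({0..1} \<times> disc) H"
    using H unfolding disc_isotopy_from_id_def by blast
  have "A \<subseteq> disc" "P - A \<subseteq> disc" "finite A" "finite (P - A)"
    using A(1) \<open>P \<subseteq> disc\<close> \<open>finite P\<close> finite_subset by auto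
  then have closed: "closed ?C" "closed ?D"
    using compact_closed_braid[OF cont] compact_imp_closed by blast+
  have split: "closed_braid P H = ?C \<union> ?D"
    using closed_braid_Un[of A "P - A" H] A(1) by (simp add: Un_absorb1)
  have "?C \<inter> ?D = {}"
    using closed_braid_disjoint[OF H \<open>A \<subseteq> disc\<close> \<open>P - A \<subseteq> disc\<close> _ A(2,3)] by blast
  then have "?C \<inter> closed_braid P H = {} \<or> ?D \<inter> closed_braid P H = {}"
    using connected_closedD[OF connected _ _ closed] split by blast
  then have "?C = {} \<or> ?D = {}"
    using split by blast
  then show "A = {} \<or> A = P"
    using A(1) unfolding closed_braid_eq_empty_iff by blast
qed

lemma connected_closed_braid_orbit:
  assumes H: "disc_isotopy_from_id g H" and "g ` P \<subseteq> P" and "P \<subseteq> disc" and "p \<in> P"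
  shows "connected (closed_braid ((\<lambda>i. (g ^^ i) p) ` {..m}) H)"
proof -
  have cont: "continuous_on ({0..1} \<times> disc) H"
    using H unfolding disc_isotopy_from_id_def by blast
  have in_disc: "(g ^^ i) p \<in> disc" for i
    using funpow_mem[OF assms(2,4)] assms(3) by blast
  show ?thesis
  proof (induction m)
    case 0
    show ?case
      using connected_closed_braid_singleton[OF cont in_disc[of 0]] by simp
  next
    case (Suc m)
    let ?q = "(g ^^ m) p"
    \<comment> \<open>the end of the strand of q is glued to the start of the strand of g q\<close>
    have "solid_torus_emb (H (1, ?q)) 1 = solid_torus_emb (H (0, g ?q)) 0"
      using H in_disc[of m] in_disc[of "Suc m"]
      unfolding disc_isotopy_from_id_def solid_torus_emb_periodic by simp
    moreover have "solid_torus_emb (H (1, ?q)) 1 \<in> closed_braid ((\<lambda>i. (g ^^ i) p) ` {..m}) H"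
      unfolding closed_braid_def by (rule image_eqI[of _ _ "(1, ?q)"]) auto
    moreover have "solid_torus_emb (H (0, g ?q)) 0 \<in> closed_braid {g ?q} H"
      unfolding closed_braid_def by (rule image_eqI[of _ _ "(0, g ?q)"]) auto
    ultimately have "closed_braid ((\<lambda>i. (g ^^ i) p) ` {..m}) H \<inter> closed_braid {g ?q} H \<noteq> {}"
      by (metis IntI empty_iff)
    then show ?case
      using connected_Un[OF Suc connected_closed_braid_singleton[OF cont in_disc[of "Suc m"]]]
      by (simp add: atMost_Suc closed_braid_Un[symmetric] Un_commute)
  qed
qed

lemma transitive_on_imp_connected_closed_braid:
  assumes "finite P" and "P \<subseteq> disc" and g: "bij_betw g P P" and H: "disc_isotopy_from_id g H"
    and "transitive_on P g"
  shows "connected (closed_braid P H)"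
proof (cases "P = {}")
  case False
  then obtain p where p: "p \<in> P"
    by blast
  have "0 < card P"
    using False \<open>finite P\<close> by (simp add: card_gt_0_iff)
  then have "{..<card P} = {..card P - 1}"
    by auto
  then have "P = (\<lambda>i. (g ^^ i) p) ` {..card P - 1}"
    using funpow_image_transitive_on[OF \<open>finite P\<close> g \<open>transitive_on P g\<close> p] by simp
  then show ?thesis
    using connected_closed_braid_orbit[OF H bij_betw_imp_surj_on[OF g, THEN equalityD1]
        \<open>P \<subseteq> disc\<close> p] by metis
qed (simp add: closed_braid_def)

lemma closure_is_knot_iff_transitive_on:
  assumes "finite P" and "P \<noteq> {}" and "P \<subseteq> disc" and "bij_betw g P P"
    and "disc_isotopy_from_id g H"
  shows "closure_is_knot P g \<longleftrightarrow> transitive_on P g"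
  unfolding closure_is_knot_def closed_braid_eq_empty_iff
  using assms connected_closed_braid_imp_transitive_on transitive_on_imp_connected_closed_braid
  by blast

section \<open>The Alexander trick\<close>

lemma norm_cone_le:
  assumes "g ` disc \<subseteq> disc" and "norm z \<le> t"
  shows "norm (of_real t * g (z / of_real t)) \<le> t"
proof (cases "t = 0")
  case False
  have "0 \<le> t"
    using assms(2) norm_ge_zero[of z] by linarith
  then have "z / of_real t \<in> disc"
    using assms(2) False by (simp add: norm_divide divide_le_eq)
  then have "norm (g (z / of_real t)) \<le> 1"
    using assms(1) by (metis image_subset_iff mem_cball_0)
  then show ?thesis
    using \<open>0 \<le> t\<close> by (simp add: norm_mult mult_left_le)
qed simp

lemma continuous_on_cone:
  fixes g :: "complex \<Rightarrow> complex"
  assumes "continuous_on disc g" and "g ` disc \<subseteq> disc"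
  shows "continuous_on {x. 0 \<le> fst x \<and> norm (snd x) \<le> fst x}
           (\<lambda>x. of_real (fst x) * g (snd x / of_real (fst x)))" (is "continuous_on ?K ?c")
  unfolding continuous_on_eq_continuous_within
proof
  fix x assume x: "x \<in> ?K"
  have bound: "norm (?c y) \<le> fst y" if "y \<in> ?K" for y
    using norm_cone_le[OF assms(2)] that by simp
  show "continuous (at x within ?K) ?c"
  proof (cases "fst x = 0")
    case True
    \<comment> \<open>at the apex the map is squeezed to 0 by the bound above\<close>
    show ?thesis
      unfolding continuous_within_eps_delta
    proof (intro allI impI exI conjI ballI)
      fix e :: real and y assume "0 < e" "y \<in> ?K" "dist y x < e"
      have "dist (?c y) (?c x) \<le> fst y"
        using bound[OF \<open>y \<in> ?K\<close>] True by (simp add: dist_norm)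
      also have "\<dots> \<le> dist y x"
        using dist_fst_le[of y x] True \<open>y \<in> ?K\<close> by (simp add: dist_real_def)
      finally show "dist (?c y) (?c x) < e"
        using \<open>dist y x < e\<close> by simp
    qed
  next
    case False
    let ?K' = "?K \<inter> {y. 0 < fst y}"
    have "(\<lambda>y. snd y / of_real (fst y)) ` ?K' \<subseteq> disc"
      by (auto simp: norm_divide divide_le_eq)
    then have "continuous_on ?K' (\<lambda>y. g (snd y / of_real (fst y)))"
      by (intro continuous_on_compose2[OF assms(1)] continuous_intros) auto
    then have "continuous_on ?K' ?c"
      by (intro continuous_intros)
    moreover have "x \<in> ?K'"
      using x False by simp
    ultimately have "continuous (at x within ?K') ?c"
      using continuous_on_eq_continuous_within by blast
    moreover have "at x within ?K = at x within ?K'"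
      by (rule at_within_nhd[of x "{y. 0 < fst y}"])
        (use x False in \<open>auto intro!: open_Collect_less continuous_intros\<close>)
    ultimately show ?thesis
      by (simp add: continuous_within)
  qed
qed

\<comment> \<open>at time t, g shrunk to the disc of radius t, extended by the identity\<close>
definition alexander_isotopy :: "(complex \<Rightarrow> complex) \<Rightarrow> real \<times> complex \<Rightarrow> complex" where
  "alexander_isotopy g = (\<lambda>(t, z). if norm z \<le> t then of_real t * g (z / of_real t) else z)"

lemma continuous_on_alexander_isotopy:
  assumes "continuous_on disc g" and "g ` disc \<subseteq> disc" and "\<And>z. z \<in> sphere 0 1 \<Longrightarrow> g z = z"
  shows "continuous_on ({0..1} \<times> disc) (alexander_isotopy g)"
proof -
  let ?K = "{x. 0 \<le> fst x \<and> norm (snd x) \<le> fst x}" and ?L = "{x. fst x \<le> norm (snd x)}"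
  let ?c = "\<lambda>x. of_real (fst x) * g (snd x / of_real (fst x))"
  have eq: "alexander_isotopy g = (\<lambda>x. if norm (snd x) \<le> fst x then ?c x else snd x)"
    unfolding alexander_isotopy_def by (simp add: case_prod_beta')
  have "continuous_on (?K \<union> ?L) (\<lambda>x. if norm (snd x) \<le> fst x then ?c x else snd x)"
  proof (rule continuous_on_cases)
    show "closed ?K" and "closed ?L"
      by (intro closed_Collect_conj closed_Collect_le continuous_intros)+
    show "continuous_on ?K ?c"
      using assms(1,2) by (rule continuous_on_cone)
    show "continuous_on ?L snd"
      by (intro continuous_intros)
    show "\<forall>x. x \<in> ?K \<and> \<not> norm (snd x) \<le> fst x \<or> x \<in> ?L \<and> norm (snd x) \<le> fst x \<longrightarrow> ?c x = snd x"
    proof (intro allI impI)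
      fix x :: "real \<times> complex"
      assume "x \<in> ?K \<and> \<not> norm (snd x) \<le> fst x \<or> x \<in> ?L \<and> norm (snd x) \<le> fst x"
      then have norm: "norm (snd x) = fst x"
        by auto
      show "?c x = snd x"
      proof (cases "fst x = 0")
        case False
        have "0 \<le> fst x"
          using norm_ge_zero[of "snd x"] norm by linarith
        then have "snd x / of_real (fst x) \<in> sphere 0 1"
          using norm False by (simp add: norm_divide)
        then show ?thesis
          using assms(3) False by simp
      qed (use norm in simp)
    qed
  qed
  moreover have "{0..1} \<times> disc \<subseteq> ?K \<union> ?L"
    by auto
  ultimately show ?thesis
    unfolding eq by (rule continuous_on_subset)
qed

lemma alexander_isotopy_mem:
  assumes "g ` disc \<subseteq> disc" and "t \<in> {0..1}" and "z \<in> disc"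
  shows "alexander_isotopy g (t, z) \<in> disc"
  using norm_cone_le[OF assms(1), of z t] assms(2,3) by (auto simp: alexander_isotopy_def)

lemma alexander_isotopy_inverse:
  assumes "g ` disc \<subseteq> disc" and "\<And>z. z \<in> disc \<Longrightarrow> g' (g z) = z"
    and "t \<in> {0..1}" and "z \<in> disc"
  shows "alexander_isotopy g' (t, alexander_isotopy g (t, z)) = z"
proof (cases "norm z \<le> t \<and> t \<noteq> 0")
  case True
  then have t: "0 < t"
    using \<open>t \<in> {0..1}\<close> by simp
  have "z / of_real t \<in> disc"
    using True t by (simp add: norm_divide divide_le_eq)
  then have "norm (g (z / of_real t)) \<le> 1" and "g' (g (z / of_real t)) = z / of_real t"
    using assms(1,2) by (auto simp: image_subset_iff)
  then show ?thesis
    using True t by (simp add: alexander_isotopy_def norm_mult mult_le_cancel_left1)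
qed (auto simp: alexander_isotopy_def)

lemma homeomorphism_alexander_isotopy:
  assumes g: "homeomorphism disc disc g g'" and boundary: "\<And>z. z \<in> sphere 0 1 \<Longrightarrow> g z = z"
    and t: "t \<in> {0..1}"
  shows "homeomorphism disc disc (\<lambda>z. alexander_isotopy g (t, z)) (\<lambda>z. alexander_isotopy g' (t, z))"
proof -
  have g': "homeomorphism disc disc g' g"
    using g by (rule homeomorphism_symD)
  have boundary': "g' z = z" if "z \<in> sphere 0 1" for z
    using homeomorphism_apply1[OF g, of z] boundary[OF that] that by simp
  have cont: "continuous_on ({0..1} \<times> disc) (alexander_isotopy g)"
    using homeomorphism_cont1[OF g] homeomorphism_image1[OF g, THEN equalityD1] boundary
    by (rule continuous_on_alexander_isotopy)
  have cont': "continuous_on ({0..1} \<times> disc) (alexander_isotopy g')"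
    using homeomorphism_cont1[OF g'] homeomorphism_image1[OF g', THEN equalityD1] boundary'
    by (rule continuous_on_alexander_isotopy)
  show ?thesis
  proof (rule homeomorphismI)
    show "continuous_on disc (\<lambda>z. alexander_isotopy g (t, z))"
      and "continuous_on disc (\<lambda>z. alexander_isotopy g' (t, z))"
      using t by (auto intro!: continuous_on_compose2[OF cont] continuous_on_compose2[OF cont']
          continuous_intros)
    show "(\<lambda>z. alexander_isotopy g (t, z)) ` disc \<subseteq> disc"
      and "(\<lambda>z. alexander_isotopy g' (t, z)) ` disc \<subseteq> disc"
      using alexander_isotopy_mem homeomorphism_image1[OF g] homeomorphism_image1[OF g'] t
      by blast+
    show "alexander_isotopy g' (t, alexander_isotopy g (t, z)) = z" if "z \<in> disc" for z
      using alexander_isotopy_inverse homeomorphism_image1[OF g] homeomorphism_apply1[OF g] t that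
      by blast
    show "alexander_isotopy g (t, alexander_isotopy g' (t, z)) = z" if "z \<in> disc" for z
      using alexander_isotopy_inverse homeomorphism_image1[OF g'] homeomorphism_apply1[OF g'] t that
      by blast
  qed
qed

lemma disc_isotopy_from_id_alexander_isotopy:
  assumes g: "homeomorphism disc disc g g'" and boundary: "\<And>z. z \<in> sphere 0 1 \<Longrightarrow> g z = z"
  shows "disc_isotopy_from_id g (alexander_isotopy g)"
proof -
  have "continuous_on ({0..1} \<times> disc) (alexander_isotopy g)"
    using homeomorphism_cont1[OF g] homeomorphism_image1[OF g, THEN equalityD1] boundary
    by (rule continuous_on_alexander_isotopy)
  moreover have "\<forall>t\<in>{0..1}. is_homeo (\<lambda>z. alexander_isotopy g (t, z))"
    unfolding is_homeo_def using homeomorphism_alexander_isotopy[OF g boundary] by blast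
  moreover have "\<forall>z\<in>disc. alexander_isotopy g (0, z) = z \<and> alexander_isotopy g (1, z) = g z"
    by (simp add: alexander_isotopy_def)
  ultimately show ?thesis
    unfolding disc_isotopy_from_id_def by (intro conjI)
qed

section \<open>Braids conjugated by an involution\<close>

lemma bij_betw_restrict_homeomorphism:
  assumes "homeomorphism S T f f'" and "A \<subseteq> S" and "f ` A = B"
  shows "bij_betw f A B"
proof -
  have "inj_on f A"
    by (rule inj_on_inverseI[where g = f']) (use homeomorphism_apply1[OF assms(1)] assms(2) in blast)
  then show ?thesis
    using assms(3) unfolding bij_betw_def by blast
qed

lemma mcg_isotopic_imp_eq_on_punctures:
  assumes "finite P" and "P \<subseteq> disc" and "mcg_isotopic P f g" and "p \<in> P"
  shows "f p = g p"
proof -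
  obtain H :: "real \<times> complex \<Rightarrow> complex" where cont: "continuous_on ({0..1} \<times> disc) H"
    and slices: "\<forall>t\<in>{0..1}. mcg_rep P (\<lambda>z. H (t, z))"
    and ends: "\<forall>z\<in>disc. H (0, z) = f z \<and> H (1, z) = g z"
    using assms(3) unfolding mcg_isotopic_def by blast
  have "p \<in> disc"
    using assms(2,4) by blast
  \<comment> \<open>the track of a puncture is a path in the finite set of punctures, hence constant\<close>
  have "continuous_on {0..1} (\<lambda>t. H (t, p))"
    by (rule continuous_on_compose2[OF cont]) (use \<open>p \<in> disc\<close> in \<open>auto intro!: continuous_intros\<close>)
  moreover have "(\<lambda>t. H (t, p)) ` {0..1} \<subseteq> P"
  proof (rule image_subsetI)
    fix t :: real assume "t \<in> {0..1}"
    then have "(\<lambda>z. H (t, z)) ` P = P"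
      using slices unfolding mcg_rep_def by blast
    then show "H (t, p) \<in> P"
      using assms(4) by blast
  qed
  then have "finite ((\<lambda>t. H (t, p)) ` {0..1})"
    using assms(1) finite_subset by blast
  ultimately have "(\<lambda>t. H (t, p)) constant_on {0..1}"
    by (rule continuous_finite_range_constant[OF connected_Icc])
  then obtain c where "\<forall>t\<in>{0..1}. H (t, p) = c"
    unfolding constant_on_def by blast
  then have "H (0, p) = H (1, p)"
    by simp
  then show ?thesis
    using ends \<open>p \<in> disc\<close> by simp
qed

lemma homeomorphism_frontier_subset:
  fixes S :: "'a::euclidean_space set"
  assumes hk: "homeomorphism S S h k" and "closed S"
  shows "h ` frontier S \<subseteq> frontier S"
proof
  fix y assume "y \<in> h ` frontier S"
  then obtain x where "x \<in> S" "x \<notin> interior S" "y = h x"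
    using \<open>closed S\<close> by (auto simp: frontier_def)
  have "k \<in> interior S \<rightarrow> interior (k ` S)"
    using homeomorphism_cont2[OF hk] by (rule continuous_image_subset_interior)
      (use homeomorphism_apply2[OF hk] in \<open>auto intro: inj_on_inverseI\<close>)
  moreover have "k y = x"
    using \<open>x \<in> S\<close> \<open>y = h x\<close> homeomorphism_apply1[OF hk] by simp
  ultimately have "y \<notin> interior S"
    using \<open>x \<notin> interior S\<close> homeomorphism_image2[OF hk] by force
  moreover have "y \<in> S"
    using \<open>x \<in> S\<close> \<open>y = h x\<close> homeomorphism_image1[OF hk] by blast
  ultimately show "y \<in> frontier S"
    using \<open>closed S\<close> by (simp add: frontier_def)
qed

lemma inverse_eq_on_punctures_of_involution:
  assumes "finite P" and "P \<subseteq> disc" and h: "homeomorphism disc disc h k" and "h ` P = P"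
    and "mcg_isotopic P (h \<circ> h) id" and "p \<in> P"
  shows "k p = h p"
proof -
  have "h (h p) = p"
    using mcg_isotopic_imp_eq_on_punctures[OF assms(1,2,5,6)] by simp
  moreover have "h p \<in> disc"
    using assms(2,4,6) by blast
  ultimately show ?thesis
    using homeomorphism_apply1[OF h, of "h p"] by simp
qed

lemma disc_isotopy_from_id_mul_conjugate:
  assumes f: "homeomorphism disc disc f f'" and f_boundary: "\<And>z. z \<in> sphere 0 1 \<Longrightarrow> f z = z"
    and h: "homeomorphism disc disc h k"
  shows "disc_isotopy_from_id (f \<circ> (h \<circ> f \<circ> k)) (alexander_isotopy (f \<circ> (h \<circ> f \<circ> k)))"
proof -
  have k: "homeomorphism disc disc k h"
    using h by (rule homeomorphism_symD)
  obtain g' where g: "homeomorphism disc disc (f \<circ> (h \<circ> f \<circ> k)) g'"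
    using homeomorphism_compose[OF homeomorphism_compose[OF homeomorphism_compose[OF k f] h] f]
    by (auto simp: o_assoc)
  have "(f \<circ> (h \<circ> f \<circ> k)) z = z" if "z \<in> sphere 0 1" for z
  proof -
    have "k z \<in> sphere 0 1"
      using homeomorphism_frontier_subset[OF k] that by (simp add: image_subset_iff)
    then show ?thesis
      using f_boundary homeomorphism_apply2[OF h] that by simp
  qed
  then show ?thesis
    by (rule disc_isotopy_from_id_alexander_isotopy[OF g])
qed

theorem lemma3p3:
  fixes n :: nat and P :: "complex set" and f h k :: "complex \<Rightarrow> complex"
  assumes "n \<ge> 1"
    and "finite P" and "card P = n" and "P \<subseteq> ball 0 1"
    and "braid_rep P f"
    and "mcg_rep P h" and "homeomorphism disc disc h k"
    and "orientation_reversing h"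
    and "mcg_isotopic P (h \<circ> h) id"
  shows "closure_is_knot P (f \<circ> (h \<circ> f \<circ> k))
     \<longleftrightarrow> odd n \<and> is_full_cycle_on P (f \<circ> h)"
proof -
  let ?g = "f \<circ> (h \<circ> f \<circ> k)" and ?\<sigma> = "f \<circ> h"
  have "P \<noteq> {}" and "P \<subseteq> disc"
    using assms(1,3,4) by auto
  obtain f' where f: "homeomorphism disc disc f f'" and "f ` P = P"
    and f_boundary: "\<And>z. z \<in> sphere 0 1 \<Longrightarrow> f z = z"
    using assms(5) unfolding braid_rep_def mcg_rep_def is_homeo_def by blast
  have "h ` P = P"
    using assms(6) unfolding mcg_rep_def by blast
  have \<sigma>: "bij_betw ?\<sigma> P P"
    using bij_betw_restrict_homeomorphism[OF assms(7) \<open>P \<subseteq> disc\<close> \<open>h ` P = P\<close>]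
      bij_betw_restrict_homeomorphism[OF f \<open>P \<subseteq> disc\<close> \<open>f ` P = P\<close>] by (rule bij_betw_trans)
  have g_eq: "?g p = (?\<sigma> \<circ> ?\<sigma>) p" if "p \<in> P" for p
    using inverse_eq_on_punctures_of_involution[OF assms(2) \<open>P \<subseteq> disc\<close> assms(7)
        \<open>h ` P = P\<close> assms(9) that] by simp
  have "bij_betw ?g P P"
    using bij_betw_cong[of P ?g "?\<sigma> \<circ> ?\<sigma>", OF g_eq] bij_betw_trans[OF \<sigma> \<sigma>] by simp
  have "closure_is_knot P ?g \<longleftrightarrow> transitive_on P ?g"
    using assms(2) \<open>P \<noteq> {}\<close> \<open>P \<subseteq> disc\<close> \<open>bij_betw ?g P P\<close>
      disc_isotopy_from_id_mul_conjugate[OF f f_boundary assms(7)]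
    by (rule closure_is_knot_iff_transitive_on)
  also have "\<dots> \<longleftrightarrow> transitive_on P (?\<sigma> \<circ> ?\<sigma>)"
    using bij_betw_imp_surj_on[OF bij_betw_trans[OF \<sigma> \<sigma>], THEN equalityD1] g_eq
    by (rule transitive_on_cong)
  also have "\<dots> \<longleftrightarrow> odd n \<and> transitive_on P ?\<sigma>"
    using transitive_on_square_iff[OF assms(2) \<open>P \<noteq> {}\<close> \<sigma>] assms(3) by simp
  also have "\<dots> \<longleftrightarrow> odd n \<and> is_full_cycle_on P ?\<sigma>"
    using is_full_cycle_on_iff_transitive_on[OF assms(2) \<open>P \<noteq> {}\<close> \<sigma>] by simp
  finally show ?thesis .
qed

end
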